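(* Let $\mathbf{X}=(X;f,\preccurlyeq,\tau)$ be a Priestley space $(X;\preccurlyeq,\tau)$ endowed with a map $f\colon X\to X$ that is an order-reversing homeomorphism of order two (i.e. $f(f(x))=x$ for all $x\in X$). Choose a subset $Y\subseteq X$ satisfying: (a) every $x\in X$ with $f(x)=x$ belongs to $Y$; (b) for every $x\in X$ with $x\neq f(x)$, exactly one of $x$, $f(x)$ belongs to $Y$. Then the system $$\sigma=\{Z\subseteq Y\mid Z\cup f(Z)\text{ is open in } (X,\tau)\}$$ is a topology on $Y$, and $(Y,\sigma)$ is a Boolean space (i.e. compact, Hausdorff and having a basis of clopen sets).
   Context: A Priestley space is a compact ordered topological space $(X;\preccurlyeq,\tau)$ such that whenever $x\not\preccurlyeq y$ there is a clopen up-set containing $x$ but not $y$. An order-reversing map $f$ satisfies $x\preccurlyeq y\Rightarrow f(y)\preccurlyeq f(x)$. *)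

theory Defs
  imports "HOL-Analysis.Analysis"
begin

definition partial_order_on_set :: "'a set \<Rightarrow> ('a \<Rightarrow> 'a \<Rightarrow> bool) \<Rightarrow> bool" where
  "partial_order_on_set X le \<longleftrightarrow>
     (\<forall>x\<in>X. le x x) \<and>
     (\<forall>x\<in>X. \<forall>y\<in>X. le x y \<and> le y x \<longrightarrow> x = y) \<and>
     (\<forall>x\<in>X. \<forall>y\<in>X. \<forall>z\<in>X. le x y \<and> le y z \<longrightarrow> le x z)"

definition up_set :: "'a set \<Rightarrow> ('a \<Rightarrow> 'a \<Rightarrow> bool) \<Rightarrow> 'a set \<Rightarrow> bool" where
  "up_set X le U \<longleftrightarrow> U \<subseteq> X \<and> (\<forall>x\<in>U. \<forall>y\<in>X. le x y \<longrightarrow> y \<in> U)"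

definition Priestley_space :: "'a topology \<Rightarrow> ('a \<Rightarrow> 'a \<Rightarrow> bool) \<Rightarrow> bool" where
  "Priestley_space T le \<longleftrightarrow>
     partial_order_on_set (topspace T) le \<and> compact_space T \<and>
     (\<forall>x\<in>topspace T. \<forall>y\<in>topspace T. \<not> le x y \<longrightarrow>
        (\<exists>U. openin T U \<and> closedin T U \<and> up_set (topspace T) le U \<and> x \<in> U \<and> y \<notin> U))"

definition order_reversing_on :: "'a set \<Rightarrow> ('a \<Rightarrow> 'a \<Rightarrow> bool) \<Rightarrow> ('a \<Rightarrow> 'a) \<Rightarrow> bool" where
  "order_reversing_on X le f \<longleftrightarrow> (\<forall>x\<in>X. \<forall>y\<in>X. le x y \<longrightarrow> le (f y) (f x))"

definition Boolean_space :: "'a topology \<Rightarrow> bool" where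
  "Boolean_space S \<longleftrightarrow> compact_space S \<and> Hausdorff_space S \<and>
     (\<forall>U. openin S U \<longrightarrow> (\<exists>\<B>. (\<forall>B\<in>\<B>. openin S B \<and> closedin S B) \<and> \<Union>\<B> = U))"

end

theory Submission
  imports Defs
begin

text \<open>Sending each point to the unique point of \<open>Y\<close> in its orbit \<open>{x, f x}\<close> identifies
  \<open>Y\<close> with the orbit space of the involution: \<open>Z \<subseteq> Y\<close> is open iff its preimage
  \<open>Z \<union> f ` Z\<close> is open. So \<open>Y\<close> carries a quotient topology of the compact space \<open>X\<close> and is
  compact. The Priestley axiom separates any two points of \<open>X\<close> by a clopen set, so by
  compactness the clopens form a basis of \<open>X\<close>; saturating a clopen \<open>C\<close> to the \<open>f\<close>-invariant
  clopen \<open>C \<union> f ` C\<close> and tracing it on \<open>Y\<close> gives clopens of \<open>Y\<close> that separate points and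
  form a basis. The order is used only through the separation axiom.\<close>

definition quotient_topology :: "'a topology \<Rightarrow> ('a \<Rightarrow> 'b) \<Rightarrow> 'b set \<Rightarrow> 'b topology" where
  "quotient_topology T q Y = topology (\<lambda>U. U \<subseteq> Y \<and> openin T {x \<in> topspace T. q x \<in> U})"

lemma istopology_quotient_topology:
  "istopology (\<lambda>U. U \<subseteq> Y \<and> openin T {x \<in> topspace T. q x \<in> U})"
  unfolding istopology_def
proof (rule conjI; intro allI impI)
  fix U V
  assume "U \<subseteq> Y \<and> openin T {x \<in> topspace T. q x \<in> U}"
    and "V \<subseteq> Y \<and> openin T {x \<in> topspace T. q x \<in> V}"
  moreover have "{x \<in> topspace T. q x \<in> U \<inter> V} =
      {x \<in> topspace T. q x \<in> U} \<inter> {x \<in> topspace T. q x \<in> V}"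
    by blast
  ultimately show "U \<inter> V \<subseteq> Y \<and> openin T {x \<in> topspace T. q x \<in> U \<inter> V}"
    by auto
next
  fix \<K>
  assume "\<forall>U\<in>\<K>. U \<subseteq> Y \<and> openin T {x \<in> topspace T. q x \<in> U}"
  moreover have "{x \<in> topspace T. q x \<in> \<Union>\<K>} = (\<Union>U\<in>\<K>. {x \<in> topspace T. q x \<in> U})"
    by blast
  ultimately show "\<Union>\<K> \<subseteq> Y \<and> openin T {x \<in> topspace T. q x \<in> \<Union>\<K>}"
    by auto
qed

lemma openin_quotient_topology:
  "openin (quotient_topology T q Y) U \<longleftrightarrow> U \<subseteq> Y \<and> openin T {x \<in> topspace T. q x \<in> U}"
  by (simp add: quotient_topology_def istopology_quotient_topology)

lemma topspace_quotient_topology: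
  assumes "q ` topspace T \<subseteq> Y"
  shows "topspace (quotient_topology T q Y) = Y"
proof -
  have "{x \<in> topspace T. q x \<in> Y} = topspace T"
    using assms by blast
  then have "openin (quotient_topology T q Y) Y"
    by (simp add: openin_quotient_topology)
  then have "Y \<subseteq> topspace (quotient_topology T q Y)"
    by (rule openin_subset)
  moreover have "topspace (quotient_topology T q Y) \<subseteq> Y"
    by (meson openin_topspace openin_quotient_topology)
  ultimately show ?thesis
    by blast
qed

lemma closedin_quotient_topology:
  assumes "q ` topspace T \<subseteq> Y"
  shows "closedin (quotient_topology T q Y) V \<longleftrightarrow> V \<subseteq> Y \<and> closedin T {x \<in> topspace T. q x \<in> V}"
proof -
  have "{x \<in> topspace T. q x \<in> Y - V} = topspace T - {x \<in> topspace T. q x \<in> V}"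
    using assms by blast
  then show ?thesis
    using assms
    by (simp add: closedin_def topspace_quotient_topology openin_quotient_topology)
qed

lemma compact_space_quotient_topology:
  assumes "compact_space T" and "q ` topspace T = Y"
  shows "compact_space (quotient_topology T q Y)"
proof -
  have "continuous_map T (quotient_topology T q Y) q"
    using assms(2) by (simp add: continuous_map topspace_quotient_topology openin_quotient_topology)
  then have "compactin (quotient_topology T q Y) (q ` topspace T)"
    using assms(1) image_compactin unfolding compact_space_def by blast
  then show ?thesis
    using assms(2) by (simp add: compact_space_def topspace_quotient_topology)
qed

lemma Priestley_space_clopen_separation:
  assumes "Priestley_space T le" and "x \<in> topspace T" "y \<in> topspace T" "x \<noteq> y"
  shows "\<exists>C. openin T C \<and> closedin T C \<and> x \<in> C \<and> y \<notin> C"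
proof -
  have antisym: "\<And>u v. u \<in> topspace T \<Longrightarrow> v \<in> topspace T \<Longrightarrow> le u v \<Longrightarrow> le v u \<Longrightarrow> u = v"
    and separation: "\<And>u v. u \<in> topspace T \<Longrightarrow> v \<in> topspace T \<Longrightarrow> \<not> le u v \<Longrightarrow>
      \<exists>U. openin T U \<and> closedin T U \<and> up_set (topspace T) le U \<and> u \<in> U \<and> v \<notin> U"
    using assms(1) unfolding Priestley_space_def partial_order_on_set_def by blast+
  consider "\<not> le x y" | "\<not> le y x"
    using antisym assms(2-4) by blast
  then show ?thesis
  proof cases
    case 1
    then show ?thesis
      using separation[OF assms(2,3)] by blast
  next
    case 2
    then obtain U where "openin T U" "closedin T U" "y \<in> U" "x \<notin> U"
      using separation[OF assms(3,2)] by blast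
    then show ?thesis
      using assms(2) by (intro exI[of _ "topspace T - U"]) auto
  qed
qed

lemma compact_clopen_separation_imp_clopen_neighbourhood:
  assumes "compact_space T"
    and separation: "\<And>x y. x \<in> topspace T \<Longrightarrow> y \<in> topspace T \<Longrightarrow> x \<noteq> y \<Longrightarrow>
      \<exists>C. openin T C \<and> closedin T C \<and> x \<in> C \<and> y \<notin> C"
    and "openin T W" "z \<in> W"
  shows "\<exists>C. openin T C \<and> closedin T C \<and> z \<in> C \<and> C \<subseteq> W"
proof -
  have z: "z \<in> topspace T"
    using assms(3,4) openin_subset by blast
  have "\<forall>p \<in> topspace T - W. \<exists>C. openin T C \<and> closedin T C \<and> p \<in> C \<and> z \<notin> C"
    using separation z assms(4) by blast
  then obtain C where C: "\<And>p. p \<in> topspace T - W \<Longrightarrow>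
      openin T (C p) \<and> closedin T (C p) \<and> p \<in> C p \<and> z \<notin> C p"
    by metis
  have "compactin T (topspace T - W)"
    using assms(1,3) by (simp add: closedin_compact_space closedin_diff)
  moreover have "topspace T - W \<subseteq> \<Union>(C ` (topspace T - W))"
    using C by blast
  ultimately obtain \<F> where \<F>: "finite \<F>" "\<F> \<subseteq> C ` (topspace T - W)" "topspace T - W \<subseteq> \<Union>\<F>"
    using C compactinD[of T "topspace T - W" "C ` (topspace T - W)"] by blast
  have "openin T (\<Union>\<F>)" "closedin T (\<Union>\<F>)"
    using \<F> C by (auto intro: closedin_Union)
  moreover have "z \<notin> \<Union>\<F>"
    using \<F> C by blast
  ultimately show ?thesis
    using \<F> z by (intro exI[of _ "topspace T - \<Union>\<F>"]) auto
qed

lemma Boolean_spaceI: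
  assumes "compact_space S" and "Hausdorff_space S"
    and clopen_nhd: "\<And>U z. openin S U \<Longrightarrow> z \<in> U \<Longrightarrow>
      \<exists>C. openin S C \<and> closedin S C \<and> z \<in> C \<and> C \<subseteq> U"
  shows "Boolean_space S"
  unfolding Boolean_space_def
proof (intro conjI assms(1,2) allI impI)
  fix U
  assume "openin S U"
  let ?\<B> = "{C. openin S C \<and> closedin S C \<and> C \<subseteq> U}"
  have "\<Union>?\<B> = U"
    using clopen_nhd[OF \<open>openin S U\<close>] by blast
  then show "\<exists>\<B>. (\<forall>B\<in>\<B>. openin S B \<and> closedin S B) \<and> \<Union>\<B> = U"
    by (intro exI[of _ ?\<B>]) blast
qed

locale involution_transversal =
  fixes T :: "'a topology" and f :: "'a \<Rightarrow> 'a" and Y :: "'a set"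
  assumes homeomorphic_f: "homeomorphic_map T T f"
    and involution: "\<And>x. x \<in> topspace T \<Longrightarrow> f (f x) = x"
    and transversal_subset: "Y \<subseteq> topspace T"
    and transversal_meets: "\<And>x. x \<in> topspace T \<Longrightarrow> x \<in> Y \<or> f x \<in> Y"
    and transversal_unique: "\<And>y. y \<in> Y \<Longrightarrow> f y \<in> Y \<Longrightarrow> f y = y"
begin

definition rep :: "'a \<Rightarrow> 'a" where
  "rep x = (if x \<in> Y then x else f x)"

lemma f_in_topspace: "x \<in> topspace T \<Longrightarrow> f x \<in> topspace T"
  using homeomorphic_f homeomorphic_imp_continuous_map continuous_map_image_subset_topspace
  by blast

lemma rep_image: "rep ` topspace T = Y"
proof
  show "rep ` topspace T \<subseteq> Y"
    using transversal_meets by (auto simp: rep_def)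
  show "Y \<subseteq> rep ` topspace T"
    using transversal_subset by (force simp: rep_def)
qed

lemma rep_f: "x \<in> topspace T \<Longrightarrow> rep (f x) = rep x"
  using involution transversal_meets transversal_unique by (auto simp: rep_def)

lemma saturation_eq_preimage_rep:
  assumes "Z \<subseteq> Y"
  shows "Z \<union> f ` Z = {x \<in> topspace T. rep x \<in> Z}"
proof
  have "z \<in> topspace T" "rep z = z" if "z \<in> Z" for z
    using that assms transversal_subset by (auto simp: rep_def)
  then show "Z \<union> f ` Z \<subseteq> {x \<in> topspace T. rep x \<in> Z}"
    using f_in_topspace rep_f by auto
  show "{x \<in> topspace T. rep x \<in> Z} \<subseteq> Z \<union> f ` Z"
    using involution by (force simp: rep_def)
qed

lemma saturation_topology_eq:
  "(\<lambda>Z. Z \<subseteq> Y \<and> openin T (Z \<union> f ` Z)) = (\<lambda>Z. Z \<subseteq> Y \<and> openin T {x \<in> topspace T. rep x \<in> Z})"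
  using saturation_eq_preimage_rep by fastforce

lemma topspace_quotient_rep: "topspace (quotient_topology T rep Y) = Y"
  by (simp add: topspace_quotient_topology rep_image)

lemma saturation_clopen_invariant:
  assumes "openin T C" "closedin T C"
  shows "openin T (C \<union> f ` C)" "closedin T (C \<union> f ` C)" "f ` (C \<union> f ` C) \<subseteq> C \<union> f ` C"
proof -
  have C: "C \<subseteq> topspace T"
    using assms(1) openin_subset by blast
  then show "openin T (C \<union> f ` C)" "closedin T (C \<union> f ` C)"
    using assms homeomorphic_map_openness[OF homeomorphic_f C]
      homeomorphic_map_closedness[OF homeomorphic_f C] by auto
  have "f ` f ` C = C"
    using C involution by (force simp: image_image)
  then show "f ` (C \<union> f ` C) \<subseteq> C \<union> f ` C"
    by (simp add: image_Un)
qed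

lemma invariant_clopen_Int_transversal:
  assumes "openin T U" "closedin T U" "f ` U \<subseteq> U"
  shows "openin (quotient_topology T rep Y) (U \<inter> Y)" "closedin (quotient_topology T rep Y) (U \<inter> Y)"
proof -
  have "U \<subseteq> topspace T"
    using assms(1) openin_subset by blast
  moreover have "rep x \<in> U \<longleftrightarrow> x \<in> U" if "x \<in> topspace T" for x
    using assms(3) involution[OF that] by (force simp: rep_def)
  ultimately have "{x \<in> topspace T. rep x \<in> U \<inter> Y} = U"
    using rep_image by blast
  then show "openin (quotient_topology T rep Y) (U \<inter> Y)" "closedin (quotient_topology T rep Y) (U \<inter> Y)"
    using assms by (simp_all add: openin_quotient_topology closedin_quotient_topology rep_image)
qed

context
  assumes clopen_separation: "\<And>x y. x \<in> topspace T \<Longrightarrow> y \<in> topspace T \<Longrightarrow> x \<noteq> y \<Longrightarrow>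
      \<exists>C. openin T C \<and> closedin T C \<and> x \<in> C \<and> y \<notin> C"
begin

lemma Hausdorff_space_quotient_rep: "Hausdorff_space (quotient_topology T rep Y)"
  unfolding Hausdorff_space_def topspace_quotient_rep
proof (intro allI impI)
  fix x y
  assume xy: "x \<in> Y \<and> y \<in> Y \<and> x \<noteq> y"
  then have in_topspace: "x \<in> topspace T" "y \<in> topspace T" "f y \<in> topspace T"
    using transversal_subset f_in_topspace by auto
  have "x \<noteq> f y"
    using xy transversal_unique by metis
  then obtain C1 C2 where C1: "openin T C1" "closedin T C1" "x \<in> C1" "y \<notin> C1"
      and C2: "openin T C2" "closedin T C2" "x \<in> C2" "f y \<notin> C2"
    using clopen_separation in_topspace xy by metis
  define V where "V = C1 \<inter> C2"
  have V: "openin T V" "closedin T V"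
    using C1 C2 by (auto simp: V_def)
  define U where "U = V \<union> f ` V"
  have "x \<in> U"
    using C1 C2 by (simp add: U_def V_def)
  moreover have "y \<notin> U"
    using C1 C2 involution openin_subset[OF C1(1)] by (auto simp: U_def V_def)
  moreover have "openin (quotient_topology T rep Y) (U \<inter> Y)" "closedin (quotient_topology T rep Y) (U \<inter> Y)"
    using invariant_clopen_Int_transversal saturation_clopen_invariant[OF V] unfolding U_def by blast+
  ultimately show "\<exists>A B. openin (quotient_topology T rep Y) A \<and> openin (quotient_topology T rep Y) B \<and>
      x \<in> A \<and> y \<in> B \<and> disjnt A B"
    using xy by (intro exI[of _ "U \<inter> Y"] exI[of _ "Y - U \<inter> Y"])
      (auto simp: closedin_def topspace_quotient_rep disjnt_def)
qed

lemma clopen_neighbourhood_quotient_rep: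
  assumes "compact_space T" and Z: "openin (quotient_topology T rep Y) Z" and "z \<in> Z"
  shows "\<exists>C. openin (quotient_topology T rep Y) C \<and> closedin (quotient_topology T rep Y) C \<and> z \<in> C \<and> C \<subseteq> Z"
proof -
  define W where "W = {x \<in> topspace T. rep x \<in> Z}"
  have "Z \<subseteq> Y" "openin T W"
    using Z by (auto simp: openin_quotient_topology W_def)
  moreover have "z \<in> W"
    using \<open>Z \<subseteq> Y\<close> \<open>z \<in> Z\<close> transversal_subset by (auto simp: W_def rep_def)
  ultimately have "\<exists>C. openin T C \<and> closedin T C \<and> z \<in> C \<and> C \<subseteq> W"
    by (intro compact_clopen_separation_imp_clopen_neighbourhood[OF assms(1)] clopen_separation)
  then obtain C where C: "openin T C" "closedin T C" "z \<in> C" "C \<subseteq> W"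
    by blast
  define U where "U = C \<union> f ` C"
  have "U \<subseteq> W"
    using C rep_f f_in_topspace by (auto simp: U_def W_def)
  then have "U \<inter> Y \<subseteq> Z"
    by (auto simp: W_def rep_def)
  moreover have "openin (quotient_topology T rep Y) (U \<inter> Y)" "closedin (quotient_topology T rep Y) (U \<inter> Y)"
    using invariant_clopen_Int_transversal saturation_clopen_invariant[OF C(1,2)] unfolding U_def by blast+
  moreover have "z \<in> U \<inter> Y"
    using C \<open>Z \<subseteq> Y\<close> \<open>z \<in> Z\<close> by (auto simp: U_def)
  ultimately show ?thesis
    by blast
qed

lemma Boolean_space_quotient_rep:
  assumes "compact_space T"
  shows "Boolean_space (quotient_topology T rep Y)"
  by (rule Boolean_spaceI[OF compact_space_quotient_topology[OF assms rep_image]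
        Hausdorff_space_quotient_rep clopen_neighbourhood_quotient_rep[OF assms]])

end

end

theorem mainTheorem1:
  fixes T :: "'a topology" and le :: "'a \<Rightarrow> 'a \<Rightarrow> bool" and f :: "'a \<Rightarrow> 'a" and Y :: "'a set"
  assumes "Priestley_space T le"
    and "homeomorphic_map T T f"
    and "order_reversing_on (topspace T) le f"
    and "\<forall>x\<in>topspace T. f (f x) = x"
    and "Y \<subseteq> topspace T"
    and "\<forall>x\<in>topspace T. f x = x \<longrightarrow> x \<in> Y"
    and "\<forall>x\<in>topspace T. x \<noteq> f x \<longrightarrow> (x \<in> Y \<longleftrightarrow> f x \<notin> Y)"
  shows "istopology (\<lambda>Z. Z \<subseteq> Y \<and> openin T (Z \<union> f ` Z))
       \<and> topspace (topology (\<lambda>Z. Z \<subseteq> Y \<and> openin T (Z \<union> f ` Z))) = Y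
       \<and> Boolean_space (topology (\<lambda>Z. Z \<subseteq> Y \<and> openin T (Z \<union> f ` Z)))"
proof -
  interpret involution_transversal T f Y
  proof
    show "x \<in> Y \<or> f x \<in> Y" if "x \<in> topspace T" for x
      using assms(6,7) that by (cases "f x = x") auto
    show "f y = y" if "y \<in> Y" "f y \<in> Y" for y
      using assms(5,7) that by fastforce
  qed (use assms(2,4,5) in auto)
  have "Boolean_space (quotient_topology T rep Y)"
  proof (rule Boolean_space_quotient_rep)
    show "\<exists>C. openin T C \<and> closedin T C \<and> x \<in> C \<and> y \<notin> C"
      if "x \<in> topspace T" "y \<in> topspace T" "x \<noteq> y" for x y
      using Priestley_space_clopen_separation[OF assms(1) that] .
    show "compact_space T"
      using assms(1) by (simp add: Priestley_space_def)
  qed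
  then show ?thesis
    unfolding saturation_topology_eq quotient_topology_def[symmetric]
    by (intro conjI istopology_quotient_topology topspace_quotient_rep)
qed

end
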